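(* Let $c>0$ be an integer and $\mu,\nu\in\mathbb R$, and let $D=D^{\mu,\nu}_c$ be the quantum Heisenberg manifold. For every $n\in\mathbb Z$ there exist $\xi_1^n,\xi_2^n\in D^{(n)}$ such that $$(\xi_1^n)^*\xi_1^n+(\xi_2^n)^*\xi_2^n=1,\qquad \xi_1^n(\xi_1^n)^*+\xi_2^n(\xi_2^n)^*=1.$$ Furthermore, $\xi_1^n$ and $\xi_2^n$ can be chosen to be smooth functions.
   Context: Write $e(x)=e^{2\pi ix}$. Let $D_0$ be the space of functions $F:\mathbb R\times S^1\times\mathbb Z\to\mathbb C$, $(x,y,p)\mapsto F(x,y,p)$, such that $p\mapsto F(\cdot,\cdot,p)$ is finitely supported with values in bounded continuous functions on $\mathbb R\times S^1$, and $F(x+1,y,p)=e(-cp(y-p\nu))F(x,y,p)$. It is a $*$-algebra with product $(F_1\cdot F_2)(x,y,p)=\sum_{q\in\mathbb Z}F_1(x,y,q)F_2(x-2q\mu,y-2q\nu,p-q)$ and involution $F^*(x,y,p)=\overline{F(x-2p\mu,y-2p\nu,-p)}$. The quantum Heisenberg manifold $D^{\mu,\nu}_c$ (Rieffel) is the C*-completion of $D_0$. For $n\in\mathbb Z$, $D^{(n)}$ denotes the set of elements of the form $F(x,y,p)=\delta_{n,p}f(x,y)$ with $f$ continuous on $\mathbb R\times S^1$ and $f(x+1,y)=e(-cn(y-n\nu))f(x,y)$ (the $n$-th spectral subspace of the gauge action); the unit $1$ is the function $\delta_{0,p}$. *)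

theory Defs
  imports "HOL-Analysis.Analysis"
begin

text \<open>Elements of D_0 are functions F x y p with x real, y real read modulo 1
  (the circle S^1 = R/Z, so functions are 1-periodic in y), p integer.\<close>

type_synonym qhm = "real \<Rightarrow> real \<Rightarrow> int \<Rightarrow> complex"

definition ee :: "real \<Rightarrow> complex" where
  "ee t = cis (2 * pi * t)"

definition qhm_supp :: "qhm \<Rightarrow> int set" where
  "qhm_supp F = {q. \<exists>x y. F x y q \<noteq> 0}"

definition qhm_mult :: "real \<Rightarrow> real \<Rightarrow> qhm \<Rightarrow> qhm \<Rightarrow> qhm" where
  "qhm_mult \<mu> \<nu> F1 F2 = (\<lambda>x y p. \<Sum>q\<in>qhm_supp F1.
      F1 x y q * F2 (x - 2 * of_int q * \<mu>) (y - 2 * of_int q * \<nu>) (p - q))"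

definition qhm_star :: "real \<Rightarrow> real \<Rightarrow> qhm \<Rightarrow> qhm" where
  "qhm_star \<mu> \<nu> F = (\<lambda>x y p. cnj (F (x - 2 * of_int p * \<mu>) (y - 2 * of_int p * \<nu>) (- p)))"

definition qhm_one :: qhm where
  "qhm_one = (\<lambda>x y p. if p = 0 then 1 else 0)"

definition spectral_fun :: "int \<Rightarrow> real \<Rightarrow> int \<Rightarrow> (real \<Rightarrow> real \<Rightarrow> complex) \<Rightarrow> bool" where
  "spectral_fun c \<nu> n f \<longleftrightarrow>
     continuous_on UNIV (\<lambda>z. f (fst z) (snd z)) \<and>
     (\<forall>x y. f x (y + 1) = f x y) \<and>
     (\<forall>x y. f (x + 1) y = ee (- of_int c * of_int n * (y - of_int n * \<nu>)) * f x y)"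

definition delta_fun :: "int \<Rightarrow> (real \<Rightarrow> real \<Rightarrow> complex) \<Rightarrow> qhm" where
  "delta_fun n f = (\<lambda>x y p. if p = n then f x y else 0)"

definition spectral_subspace :: "int \<Rightarrow> real \<Rightarrow> int \<Rightarrow> qhm set" where
  "spectral_subspace c \<nu> n = {F. \<exists>f. spectral_fun c \<nu> n f \<and> F = delta_fun n f}"

definition smooth2 :: "(real \<Rightarrow> real \<Rightarrow> complex) \<Rightarrow> bool" where
  "smooth2 f \<longleftrightarrow> (\<exists>D :: nat \<Rightarrow> nat \<Rightarrow> real \<Rightarrow> real \<Rightarrow> complex.
     D 0 0 = f \<and>
     (\<forall>i j. continuous_on UNIV (\<lambda>z. D i j (fst z) (snd z))) \<and>
     (\<forall>i j x y. ((\<lambda>t. D i j t y) has_vector_derivative D (Suc i) j x y) (at x)) \<and>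
     (\<forall>i j x y. ((\<lambda>s. D i j x s) has_vector_derivative D i (Suc j) x y) (at y)))"

end

theory Submission
  imports Defs "HOL-Computational_Algebra.Polynomial"
begin

text \<open>Take \<open>f\<^sub>k x y = A\<^sub>k x * e(- c n \<lfloor>x + s\<^sub>k\<rfloor> (y - n \<nu>))\<close> with \<open>s\<^sub>1 = 0\<close>,
  \<open>s\<^sub>2 = 1/2\<close> and real 1-periodic amplitudes \<open>A\<^sub>k\<close>. The phase is 1-periodic in \<open>y\<close> and
  picks up exactly the factor \<open>e(- c n (y - n \<nu>))\<close> under \<open>x \<mapsto> x + 1\<close>, so \<open>\<delta>\<^sub>n f\<^sub>k\<close> lies in
  the \<open>n\<close>-th spectral subspace;
  its jumps at \<open>x + s\<^sub>k \<in> \<int>\<close> do not spoil smoothness because \<open>A\<^sub>k\<close> vanishes on a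
  neighbourhood of these points. For \<open>\<xi> = \<delta>\<^sub>n f\<close> both \<open>\<xi>\<^sup>*\<xi>\<close> and \<open>\<xi>\<xi>\<^sup>*\<close> are \<open>\<delta>\<^sub>0\<close> of a
  translate of \<open>|f|\<^sup>2\<close>, so both identities reduce to \<open>A\<^sub>1\<^sup>2 + A\<^sub>2\<^sup>2 = 1\<close>. This holds for
  \<open>A\<^sub>1 = cos (\<pi> S / 2)\<close>, \<open>A\<^sub>2 = sin (\<pi> S / 2)\<close>, where \<open>S\<close> is a smooth 1-periodic cutoff,
  built from the flat function \<open>exp (- 1 / t)\<close>, that equals 1 near \<open>\<int>\<close> and 0 near
  \<open>\<int> + 1/2\<close>.\<close>

section \<open>Smooth real functions\<close>

fun Ck :: "nat \<Rightarrow> (real \<Rightarrow> real) \<Rightarrow> bool" where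
  "Ck 0 f \<longleftrightarrow> True"
| "Ck (Suc k) f \<longleftrightarrow> (\<exists>f'. (\<forall>x. (f has_real_derivative f' x) (at x)) \<and> Ck k f')"

definition smooth_real :: "(real \<Rightarrow> real) \<Rightarrow> bool" where
  "smooth_real f \<longleftrightarrow> (\<forall>k. Ck k f)"

lemma Ck_SucD: "Ck (Suc k) f \<Longrightarrow> Ck k f"
proof (induction k arbitrary: f)
  case (Suc k)
  then obtain f' where "\<forall>x. (f has_real_derivative f' x) (at x)" "Ck (Suc k) f'" by auto
  with Suc.IH show ?case by auto
qed simp

lemma Ck_const: "Ck k (\<lambda>x. c)"
  by (induction k arbitrary: c) (auto intro!: exI[of _ "\<lambda>x. 0"] derivative_eq_intros)

lemma Ck_add: "Ck k f \<Longrightarrow> Ck k g \<Longrightarrow> Ck k (\<lambda>x. f x + g x)"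
proof (induction k arbitrary: f g)
  case (Suc k)
  then obtain f' g' where "\<forall>x. (f has_real_derivative f' x) (at x)" "Ck k f'"
    "\<forall>x. (g has_real_derivative g' x) (at x)" "Ck k g'" by auto
  with Suc.IH show ?case
    by (auto intro!: exI[of _ "\<lambda>x. f' x + g' x"] derivative_eq_intros)
qed simp

lemma Ck_mult: "Ck k f \<Longrightarrow> Ck k g \<Longrightarrow> Ck k (\<lambda>x. f x * g x)"
proof (induction k arbitrary: f g)
  case (Suc k)
  then obtain f' g' where f': "\<forall>x. (f has_real_derivative f' x) (at x)" "Ck k f'"
    and g': "\<forall>x. (g has_real_derivative g' x) (at x)" "Ck k g'" by auto
  have "Ck k (\<lambda>x. f' x * g x + f x * g' x)"
    using Suc Ck_SucD Ck_add f' g' by metis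
  moreover have "\<forall>x. ((\<lambda>x. f x * g x) has_real_derivative f' x * g x + f x * g' x) (at x)"
    using f' g' by (auto intro!: derivative_eq_intros)
  ultimately show ?case by auto
qed simp

lemma Ck_inverse: "Ck k g \<Longrightarrow> (\<And>x. g x \<noteq> 0) \<Longrightarrow> Ck k (\<lambda>x. inverse (g x))"
proof (induction k arbitrary: g)
  case (Suc k)
  then obtain g' where g': "\<forall>x. (g has_real_derivative g' x) (at x)" "Ck k g'" by auto
  have "Ck k (\<lambda>x. inverse (g x))" using Suc Ck_SucD by blast
  then have "Ck k (\<lambda>x. (- 1) * g' x * (inverse (g x) * inverse (g x)))"
    using Ck_mult Ck_const g'(2) by blast
  moreover have "\<forall>x. ((\<lambda>x. inverse (g x)) has_real_derivative
                    (- 1) * g' x * (inverse (g x) * inverse (g x))) (at x)"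
    using g' Suc.prems(2) by (auto intro!: derivative_eq_intros simp: power2_eq_square)
  ultimately show ?case by auto
qed simp

lemma smooth_realD_deriv:
  assumes "smooth_real f"
  shows "(f has_real_derivative deriv f x) (at x)" "smooth_real (deriv f)"
proof -
  have "\<exists>f'. (\<forall>x. (f has_real_derivative f' x) (at x)) \<and> Ck k f'" for k
    using assms unfolding smooth_real_def by (metis Ck.simps(2))
  moreover have "(\<forall>x. (f has_real_derivative f' x) (at x)) \<Longrightarrow> f' = deriv f" for f'
    by (intro ext) (metis DERIV_imp_deriv)
  ultimately show "(f has_real_derivative deriv f x) (at x)" "smooth_real (deriv f)"
    unfolding smooth_real_def by metis+
qed

lemma smooth_real_iterated_deriv: "smooth_real f \<Longrightarrow> smooth_real ((deriv ^^ i) f)"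
  by (induction i) (auto intro: smooth_realD_deriv(2))

lemma has_real_derivative_iterated_deriv:
  "smooth_real f \<Longrightarrow> ((deriv ^^ i) f has_real_derivative (deriv ^^ Suc i) f x) (at x)"
  using smooth_realD_deriv(1)[OF smooth_real_iterated_deriv] by simp

lemma smooth_real_if_derivative_chain:
  assumes "\<And>i x. (D i has_real_derivative D (Suc i) x) (at x)"
  shows "smooth_real (D 0)"
proof -
  have "\<forall>i. Ck k (D i)" for k
    by (induction k) (use assms in auto)
  then show ?thesis unfolding smooth_real_def by auto
qed

lemma smooth_real_const: "smooth_real (\<lambda>x. c)"
  using Ck_const smooth_real_def by auto

lemma smooth_real_add: "smooth_real f \<Longrightarrow> smooth_real g \<Longrightarrow> smooth_real (\<lambda>x. f x + g x)"
  using Ck_add smooth_real_def by auto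

lemma smooth_real_mult: "smooth_real f \<Longrightarrow> smooth_real g \<Longrightarrow> smooth_real (\<lambda>x. f x * g x)"
  using Ck_mult smooth_real_def by auto

lemma smooth_real_id: "smooth_real (\<lambda>x. x)"
proof -
  have "Ck k (\<lambda>x. x)" for k
    by (cases k) (auto intro!: exI[of _ "\<lambda>x. 1"] Ck_const)
  then show ?thesis unfolding smooth_real_def ..
qed

lemma smooth_real_inverse:
  "smooth_real g \<Longrightarrow> (\<And>x. g x \<noteq> 0) \<Longrightarrow> smooth_real (\<lambda>x. inverse (g x))"
  using Ck_inverse smooth_real_def by auto

lemma smooth_real_compose:
  assumes "smooth_real g" "smooth_real f"
  shows "smooth_real (\<lambda>x. g (f x))"
proof -
  have "Ck k (\<lambda>x. g (f x))" if "Ck k f" "smooth_real g" for k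
    using that
  proof (induction k arbitrary: f g)
    case (Suc k)
    then obtain f' where f': "\<forall>x. (f has_real_derivative f' x) (at x)" "Ck k f'" by auto
    have "Ck k (\<lambda>x. deriv g (f x) * f' x)"
      using Suc Ck_SucD Ck_mult f'(2) smooth_realD_deriv(2) by metis
    moreover have "((\<lambda>x. g (f x)) has_real_derivative deriv g (f x) * f' x) (at x)" for x
      using DERIV_chain2[OF smooth_realD_deriv(1)[OF Suc.prems(2)]] f'(1) by blast
    ultimately show ?case by (auto intro!: exI[of _ "\<lambda>x. deriv g (f x) * f' x"])
  qed simp
  then show ?thesis using assms smooth_real_def by blast
qed

lemma smooth_real_sin_shift: "smooth_real (\<lambda>x. sin (x + a))"
proof -
  have "((\<lambda>x. sin (x + a + real i * (pi / 2))) has_real_derivative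
          sin (x + a + real (Suc i) * (pi / 2))) (at x)" for i x
  proof -
    have "sin (x + a + real (Suc i) * (pi / 2)) = sin ((x + a + real i * (pi / 2)) + pi / 2)"
      by (rule arg_cong[of _ _ sin]) (simp add: field_simps)
    also have "\<dots> = cos (x + a + real i * (pi / 2))"
      by (simp only: sin_add sin_pi_half cos_pi_half mult_zero_right mult_1_right add_0_left)
    finally show ?thesis by (auto intro!: derivative_eq_intros)
  qed
  from smooth_real_if_derivative_chain[where D="\<lambda>i x. sin (x + a + real i * (pi / 2))", OF this]
  show ?thesis by simp
qed

lemma smooth_real_sin: "smooth_real sin"
  using smooth_real_sin_shift[of 0] by simp

lemma smooth_real_cos: "smooth_real cos"
  using smooth_real_sin_shift[of "pi / 2"] by (simp add: sin_add)

section \<open>A smooth periodic partition of unity\<close>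

text \<open>For \<open>t > 0\<close> the \<open>i\<close>-th derivative of \<open>exp (- 1 / t)\<close> is
  \<open>P\<^sub>i (1 / t) * exp (- 1 / t)\<close> with \<open>P\<^sub>0 = 1\<close> and \<open>P\<^sub>i\<^sub>+\<^sub>1 u = u\<^sup>2 (P\<^sub>i u - P\<^sub>i' u)\<close>.\<close>

fun flat_exp_poly :: "nat \<Rightarrow> real poly" where
  "flat_exp_poly 0 = 1"
| "flat_exp_poly (Suc i) = pCons 0 (pCons 0 (flat_exp_poly i - pderiv (flat_exp_poly i)))"

definition flat_exp_deriv :: "nat \<Rightarrow> real \<Rightarrow> real" where
  "flat_exp_deriv i t = (if t > 0 then poly (flat_exp_poly i) (inverse t) * exp (- inverse t) else 0)"

definition flat_exp :: "real \<Rightarrow> real" where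
  "flat_exp = flat_exp_deriv 0"

lemma has_real_derivative_poly_inverse_exp:
  assumes "t > 0"
  shows "((\<lambda>t. poly Q (inverse t) * exp (- inverse t)) has_real_derivative
          poly (pCons 0 (pCons 0 (Q - pderiv Q))) (inverse t) * exp (- inverse t)) (at t)"
proof -
  have "((\<lambda>t. poly Q (inverse t) * exp (- inverse t)) has_real_derivative
     poly (pderiv Q) (inverse t) * (- (inverse t * inverse t)) * exp (- inverse t)
     + poly Q (inverse t) * (exp (- inverse t) * (- (- (inverse t * inverse t))))) (at t)"
    using assms
    by (auto intro!: derivative_eq_intros DERIV_chain2[OF poly_DERIV] simp: power2_eq_square)
  then show ?thesis by (simp add: algebra_simps)
qed

lemma poly_times_exp_neg_tendsto_0:
  fixes Q :: "real poly"
  shows "((\<lambda>u. poly Q u * exp (- u)) \<longlongrightarrow> 0) at_top"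
proof -
  have "((\<lambda>u. \<Sum>i\<le>degree Q. coeff Q i * (u ^ i / exp u)) \<longlongrightarrow> (\<Sum>i\<le>degree Q. coeff Q i * 0)) at_top"
    by (intro tendsto_sum tendsto_mult_left tendsto_power_div_exp_0)
  moreover have "(\<Sum>i\<le>degree Q. coeff Q i * (u ^ i / exp u)) = poly Q u * exp (- u)" for u
    by (simp add: poly_altdef sum_distrib_right exp_minus divide_inverse mult.assoc)
  ultimately show ?thesis by simp
qed

lemma flat_exp_deriv_has_derivative_at_0: "(flat_exp_deriv i has_real_derivative 0) (at 0)"
proof -
  have "((\<lambda>t. flat_exp_deriv i t / t) \<longlongrightarrow> 0) (at_left 0)"
    by (rule tendsto_eventually)
       (auto simp: eventually_at_filter flat_exp_deriv_def intro: always_eventually)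
  moreover have "((\<lambda>t. flat_exp_deriv i t / t) \<longlongrightarrow> 0) (at_right 0)"
  proof (rule Lim_transform_eventually)
    show "((\<lambda>t. poly (pCons 0 (flat_exp_poly i)) (inverse t) * exp (- inverse t)) \<longlongrightarrow> 0) (at_right 0)"
      by (rule filterlim_compose[OF poly_times_exp_neg_tendsto_0 filterlim_inverse_at_top_right])
    show "\<forall>\<^sub>F t in at_right 0. poly (pCons 0 (flat_exp_poly i)) (inverse t) * exp (- inverse t)
                               = flat_exp_deriv i t / t"
      by (rule eventually_mono[OF eventually_at_right_less]) (simp add: flat_exp_deriv_def field_simps)
  qed
  ultimately show ?thesis
    by (simp add: has_field_derivative_iff filterlim_at_split flat_exp_deriv_def)
qed

lemma flat_exp_deriv_has_derivative:
  "(flat_exp_deriv i has_real_derivative flat_exp_deriv (Suc i) t) (at t)"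
proof -
  consider "t > 0" | "t < 0" | "t = 0" by linarith
  then show ?thesis
  proof cases
    case 1
    have "((\<lambda>t. poly (flat_exp_poly i) (inverse t) * exp (- inverse t))
            has_real_derivative flat_exp_deriv (Suc i) t) (at t)"
      using has_real_derivative_poly_inverse_exp[OF 1] 1 by (simp add: flat_exp_deriv_def)
    then show ?thesis
      by (rule has_field_derivative_transform_within_open[where S="{0<..}"])
         (use 1 in \<open>auto simp: flat_exp_deriv_def\<close>)
  next
    case 2
    have "((\<lambda>t. 0) has_real_derivative flat_exp_deriv (Suc i) t) (at t)"
      using 2 by (simp add: flat_exp_deriv_def)
    then show ?thesis
      by (rule has_field_derivative_transform_within_open[where S="{..<0}"])
         (use 2 in \<open>auto simp: flat_exp_deriv_def\<close>)
  next
    case 3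
    then show ?thesis using flat_exp_deriv_has_derivative_at_0 by (simp add: flat_exp_deriv_def)
  qed
qed

lemma smooth_real_flat_exp: "smooth_real flat_exp"
  unfolding flat_exp_def by (rule smooth_real_if_derivative_chain) (rule flat_exp_deriv_has_derivative)

lemma flat_exp_pos: "t > 0 \<Longrightarrow> flat_exp t > 0"
  and flat_exp_eq_0: "t \<le> 0 \<Longrightarrow> flat_exp t = 0"
  and flat_exp_nonneg: "flat_exp t \<ge> 0"
  by (simp_all add: flat_exp_def flat_exp_deriv_def)

definition circle_cutoff :: "real \<Rightarrow> real" where
  "circle_cutoff x = flat_exp (cos (2 * pi * x) + 1 / 2)
      / (flat_exp (cos (2 * pi * x) + 1 / 2) + flat_exp (1 / 2 - cos (2 * pi * x)))"

definition amp_cos :: "real \<Rightarrow> real" where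
  "amp_cos x = cos (pi / 2 * circle_cutoff x)"

definition amp_sin :: "real \<Rightarrow> real" where
  "amp_sin x = sin (pi / 2 * circle_cutoff x)"

lemma circle_cutoff_denominator_pos:
  "flat_exp (u + 1 / 2) + flat_exp (1 / 2 - u) > 0"
  using flat_exp_pos[of "u + 1 / 2"] flat_exp_pos[of "1 / 2 - u"] flat_exp_nonneg[of "u + 1 / 2"]
    flat_exp_nonneg[of "1 / 2 - u"]
  by (cases "u + 1 / 2 > 0") auto

lemma smooth_real_circle_cutoff: "smooth_real circle_cutoff"
proof -
  have cos_2pi: "smooth_real (\<lambda>x. cos (2 * pi * x))"
    using smooth_real_compose[OF smooth_real_cos smooth_real_mult[OF smooth_real_const smooth_real_id]] .
  have num: "smooth_real (\<lambda>x. flat_exp (cos (2 * pi * x) + 1 / 2))"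
    by (intro smooth_real_compose[OF smooth_real_flat_exp] smooth_real_add cos_2pi smooth_real_const)
  have "smooth_real (\<lambda>x. flat_exp (1 / 2 + (- 1) * cos (2 * pi * x)))"
    by (intro smooth_real_compose[OF smooth_real_flat_exp] smooth_real_add smooth_real_mult
        cos_2pi smooth_real_const)
  then have "smooth_real (\<lambda>x. inverse (flat_exp (cos (2 * pi * x) + 1 / 2)
                                      + flat_exp (1 / 2 - cos (2 * pi * x))))"
    by (intro smooth_real_inverse smooth_real_add num)
       (use circle_cutoff_denominator_pos in \<open>auto simp: less_le\<close>)
  with num show ?thesis
    unfolding circle_cutoff_def divide_inverse by (rule smooth_real_mult)
qed

lemma smooth_real_amp_cos: "smooth_real amp_cos"
  and smooth_real_amp_sin: "smooth_real amp_sin"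
  unfolding amp_cos_def amp_sin_def
  by (intro smooth_real_compose[OF smooth_real_cos] smooth_real_compose[OF smooth_real_sin]
      smooth_real_mult smooth_real_const smooth_real_circle_cutoff)+

lemma amp_cos_sq_add_amp_sin_sq: "(amp_cos x)\<^sup>2 + (amp_sin x)\<^sup>2 = 1"
  unfolding amp_cos_def amp_sin_def by simp

lemma circle_cutoff_periodic: "circle_cutoff (x + 1) = circle_cutoff x"
  by (simp add: circle_cutoff_def distrib_left)

lemma amp_cos_periodic: "amp_cos (x + 1) = amp_cos x"
  and amp_sin_periodic: "amp_sin (x + 1) = amp_sin x"
  by (simp_all add: amp_cos_def amp_sin_def circle_cutoff_periodic)

lemma eventually_cos_2pi_gt:
  "a < cos (2 * pi * x) \<Longrightarrow> \<forall>\<^sub>F t in nhds x. a < cos (2 * pi * t)"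
  by (rule order_tendstoD(1)) (auto intro!: tendsto_eq_intros filterlim_ident)

lemma eventually_cos_2pi_less:
  "cos (2 * pi * x) < a \<Longrightarrow> \<forall>\<^sub>F t in nhds x. cos (2 * pi * t) < a"
  by (rule order_tendstoD(2)) (auto intro!: tendsto_eq_intros filterlim_ident)

lemma amp_cos_eventually_0:
  assumes "x \<in> \<int>"
  shows "\<forall>\<^sub>F t in nhds x. amp_cos t = 0"
proof -
  from assms obtain m where "x = of_int m" by (auto elim: Ints_cases)
  then have "cos (2 * pi * x) = 1" by simp
  then have "\<forall>\<^sub>F t in nhds x. 1 / 2 < cos (2 * pi * t)"
    by (intro eventually_cos_2pi_gt) simp
  then show ?thesis
  proof eventually_elim
    case (elim t)
    then show ?case
      using flat_exp_pos[of "cos (2 * pi * t) + 1 / 2"]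
      by (simp add: amp_cos_def circle_cutoff_def flat_exp_eq_0)
  qed
qed

lemma amp_sin_eventually_0:
  assumes "x + 1 / 2 \<in> \<int>"
  shows "\<forall>\<^sub>F t in nhds x. amp_sin t = 0"
proof -
  from assms obtain m where m: "x = of_int m - 1 / 2" by (metis Ints_cases add_diff_cancel_right')
  have "2 * pi * x = pi * of_int (2 * m - 1)" unfolding m by (simp add: algebra_simps)
  then have "cos (2 * pi * x) = - 1" by (simp only: cos_npi_int) simp
  then have "\<forall>\<^sub>F t in nhds x. cos (2 * pi * t) < - (1 / 2)"
    by (intro eventually_cos_2pi_less) simp
  then show ?thesis
    by eventually_elim (simp add: amp_sin_def circle_cutoff_def flat_exp_eq_0)
qed

section \<open>Amplitudes times jumping phases\<close>

lemma ee_add: "ee (a + b) = ee a * ee b"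
  by (simp add: ee_def cis_mult distrib_left)

lemma ee_of_int: "ee (of_int j) = 1"
  unfolding ee_def by (rule cis_multiple_2pi) simp

lemma cnj_ee_mult_ee: "cnj (ee t) * ee t = 1"
  by (simp add: ee_def cis_cnj cis_mult)

lemma has_vector_derivative_ee_affine:
  "((\<lambda>s. ee (w * (s - b))) has_vector_derivative \<i> * of_real (2 * pi * w) * ee (w * (y - b))) (at y)"
proof -
  define h where "h z = exp (\<i> * of_real (2 * pi * w) * (z - of_real b))" for z
  have "(h has_field_derivative \<i> * of_real (2 * pi * w) * h (of_real y)) (at (of_real y))"
    unfolding h_def by (auto intro!: derivative_eq_intros)
  then have "((\<lambda>s. h (of_real s)) has_vector_derivative \<i> * of_real (2 * pi * w) * h (of_real y)) (at y)"
    using has_vector_derivative_real_field by blast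
  moreover have "h (of_real s) = ee (w * (s - b))" for s
    unfolding h_def ee_def cis_conv_exp by (simp add: algebra_simps)
  ultimately show ?thesis by simp
qed

lemma iterated_deriv_eq_0_on_open:
  assumes "smooth_real A" "open U" "\<And>x. x \<in> U \<Longrightarrow> A x = 0" "x \<in> U"
  shows "(deriv ^^ i) A x = 0"
  using assms(4)
proof (induction i arbitrary: x)
  case (Suc i)
  have "((deriv ^^ i) A has_real_derivative 0) (at x)"
    by (rule has_field_derivative_transform_within_open[OF DERIV_const assms(2) Suc.prems])
       (simp add: Suc.IH)
  with has_real_derivative_iterated_deriv[OF assms(1)] show ?case
    by (rule DERIV_unique)
qed (use assms(3) in simp)

lemma locally_iterated_deriv_0_or_floor_const:
  assumes "smooth_real A" "\<And>x. x + s \<in> \<int> \<Longrightarrow> \<forall>\<^sub>F t in nhds x. A t = 0"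
  obtains U m where "open U" "x0 \<in> U" "\<And>x i. x \<in> U \<Longrightarrow> (deriv ^^ i) A x = 0 \<or> \<lfloor>x + s\<rfloor> = m"
proof (cases "x0 + s \<in> \<int>")
  case True
  then obtain U where U: "open U" "x0 \<in> U" "\<forall>t\<in>U. A t = 0"
    using assms(2) unfolding eventually_nhds by meson
  show ?thesis
    by (rule that[OF U(1,2)]) (use iterated_deriv_eq_0_on_open[OF assms(1) U(1)] U(3) in blast)
next
  case False
  define m where "m = \<lfloor>x0 + s\<rfloor>"
  have "of_int m \<noteq> x0 + s" using False unfolding m_def by (metis Ints_of_int)
  then have "of_int m - s < x0" "x0 < of_int m + 1 - s"
    using of_int_floor_le[of "x0 + s"] real_of_int_floor_add_one_gt[of "x0 + s"]
    unfolding m_def by linarith+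
  moreover have "\<lfloor>x + s\<rfloor> = m" if "x \<in> {of_int m - s <..< of_int m + 1 - s}" for x
    using that by (simp add: floor_eq_iff)
  ultimately show ?thesis
    using that[of "{of_int m - s <..< of_int m + 1 - s}" m] by auto
qed

text \<open>The \<open>(i, j)\<close>-th partial derivative of \<open>A x * e(K m (y - b))\<close> for a fixed integer \<open>m\<close>.\<close>

definition phase_deriv ::
    "(real \<Rightarrow> real) \<Rightarrow> real \<Rightarrow> real \<Rightarrow> int \<Rightarrow> nat \<Rightarrow> nat \<Rightarrow> real \<Rightarrow> real \<Rightarrow> complex" where
  "phase_deriv A K b m i j x y = of_real ((deriv ^^ i) A x)
      * (\<i> * of_real (2 * pi * K * of_int m)) ^ j * ee (K * of_int m * (y - b))"

lemma phase_deriv_has_derivative_y: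
  "((\<lambda>s. phase_deriv A K b m i j x s) has_vector_derivative phase_deriv A K b m i (Suc j) x y) (at y)"
  using has_vector_derivative_mult_right[OF has_vector_derivative_ee_affine[of "K * of_int m" b y],
      of "of_real ((deriv ^^ i) A x) * (\<i> * of_real (2 * pi * K * of_int m)) ^ j"]
  by (simp add: phase_deriv_def algebra_simps)

lemma phase_deriv_has_derivative_x:
  assumes "smooth_real A"
  shows "((\<lambda>t. phase_deriv A K b m i j t y) has_vector_derivative phase_deriv A K b m (Suc i) j x y) (at x)"
  using has_vector_derivative_mult_left[OF
      has_vector_derivative_of_real[OF has_real_derivative_iterated_deriv[OF assms, of i x]],
      of "(\<i> * of_real (2 * pi * K * of_int m)) ^ j * ee (K * of_int m * (y - b))"]
  by (simp add: phase_deriv_def mult.assoc)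

lemma continuous_on_phase_deriv:
  assumes "smooth_real A"
  shows "continuous_on S (\<lambda>z. phase_deriv A K b m i j (fst z) (snd z))"
proof -
  have "continuous_on UNIV ((deriv ^^ i) A)"
    using DERIV_isCont[OF has_real_derivative_iterated_deriv[OF assms]]
    by (simp add: continuous_at_imp_continuous_on)
  then have "continuous_on S (\<lambda>z. (deriv ^^ i) A (fst z))"
    by (rule continuous_on_compose2) (auto intro: continuous_intros)
  then show ?thesis
    unfolding phase_deriv_def ee_def cis_conv_exp by (intro continuous_intros continuous_on_of_real)
qed

lemma phase_deriv_floor_locally_eq:
  assumes "smooth_real A" "\<And>x. x + s \<in> \<int> \<Longrightarrow> \<forall>\<^sub>F t in nhds x. A t = 0"
  obtains U m where "open U" "a \<in> U"
    "\<And>x i j y. x \<in> U \<Longrightarrow> phase_deriv A K b \<lfloor>x + s\<rfloor> i j x y = phase_deriv A K b m i j x y"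
proof -
  obtain U m where U: "open U" "a \<in> U"
    "\<And>x i. x \<in> U \<Longrightarrow> (deriv ^^ i) A x = 0 \<or> \<lfloor>x + s\<rfloor> = m"
    using locally_iterated_deriv_0_or_floor_const[OF assms] by blast
  have "phase_deriv A K b \<lfloor>x + s\<rfloor> i j x y = phase_deriv A K b m i j x y" if "x \<in> U" for x i j y
    using U(3)[OF that, of i] unfolding phase_deriv_def by auto
  with U(1,2) that show ?thesis by blast
qed

lemma smooth2_amplitude_phase:
  assumes "smooth_real A" "\<And>x. x + s \<in> \<int> \<Longrightarrow> \<forall>\<^sub>F t in nhds x. A t = 0"
  shows "smooth2 (\<lambda>x y. of_real (A x) * ee (K * of_int \<lfloor>x + s\<rfloor> * (y - b)))"
proof -
  define D where "D i j x y = phase_deriv A K b \<lfloor>x + s\<rfloor> i j x y" for i j x y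
  have cont: "continuous_on UNIV (\<lambda>z. D i j (fst z) (snd z))" for i j
  proof (rule continuous_at_imp_continuous_on, rule ballI)
    fix z :: "real \<times> real"
    obtain U m where U: "open U" "fst z \<in> U"
      "\<And>x i j y. x \<in> U \<Longrightarrow> D i j x y = phase_deriv A K b m i j x y"
      using phase_deriv_floor_locally_eq[OF assms, where a="fst z" and K=K and b=b] unfolding D_def by metis
    have "continuous_on (U \<times> UNIV) (\<lambda>z. D i j (fst z) (snd z))"
      by (rule continuous_on_cong[THEN iffD1, OF refl _ continuous_on_phase_deriv[OF assms(1)]])
         (simp add: U(3) mem_Times_iff)
    moreover have "open (U \<times> (UNIV :: real set))" "z \<in> U \<times> UNIV"
      using U(1,2) by (auto simp: open_Times mem_Times_iff)
    ultimately show "isCont (\<lambda>z. D i j (fst z) (snd z)) z"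
      using continuous_on_eq_continuous_at by blast
  qed
  have dx: "((\<lambda>t. D i j t y) has_vector_derivative D (Suc i) j x y) (at x)" for i j x y
  proof -
    obtain U m where U: "open U" "x \<in> U"
      "\<And>x i j y. x \<in> U \<Longrightarrow> D i j x y = phase_deriv A K b m i j x y"
      using phase_deriv_floor_locally_eq[OF assms, where a=x and K=K and b=b] unfolding D_def by metis
    have "((\<lambda>t. D i j t y) has_vector_derivative phase_deriv A K b m (Suc i) j x y) (at x)"
      by (rule has_vector_derivative_transform_within_open[OF
            phase_deriv_has_derivative_x[OF assms(1)] U(1,2)]) (simp add: U(3))
    with U(2,3) show ?thesis by simp
  qed
  have dy: "((\<lambda>s. D i j x s) has_vector_derivative D i (Suc j) x y) (at y)" for i j x y
    unfolding D_def by (rule phase_deriv_has_derivative_y)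
  have "D 0 0 = (\<lambda>x y. of_real (A x) * ee (K * of_int \<lfloor>x + s\<rfloor> * (y - b)))"
    by (intro ext) (simp add: D_def phase_deriv_def)
  with cont dx dy show ?thesis unfolding smooth2_def by (intro exI[of _ D]) simp
qed

definition twisted :: "int \<Rightarrow> real \<Rightarrow> int \<Rightarrow> real \<Rightarrow> (real \<Rightarrow> real) \<Rightarrow> real \<Rightarrow> real \<Rightarrow> complex" where
  "twisted c \<nu> n s A x y = of_real (A x) * ee (- of_int (c * n) * of_int \<lfloor>x + s\<rfloor> * (y - of_int n * \<nu>))"

lemma smooth2_twisted:
  "smooth_real A \<Longrightarrow> (\<And>x. x + s \<in> \<int> \<Longrightarrow> \<forall>\<^sub>F t in nhds x. A t = 0) \<Longrightarrow> smooth2 (twisted c \<nu> n s A)"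
  unfolding twisted_def[abs_def] by (rule smooth2_amplitude_phase)

lemma smooth2_imp_continuous: "smooth2 f \<Longrightarrow> continuous_on UNIV (\<lambda>z. f (fst z) (snd z))"
  unfolding smooth2_def by metis

lemma spectral_fun_twisted:
  assumes "\<And>x. A (x + 1) = A x" "continuous_on UNIV (\<lambda>z. twisted c \<nu> n s A (fst z) (snd z))"
  shows "spectral_fun c \<nu> n (twisted c \<nu> n s A)"
  unfolding spectral_fun_def
proof (intro conjI allI assms(2))
  fix x y :: real
  have "- of_int (c * n) * of_int \<lfloor>x + s\<rfloor> * (y + 1 - of_int n * \<nu>)
      = - of_int (c * n) * of_int \<lfloor>x + s\<rfloor> * (y - of_int n * \<nu>) + of_int (- c * n * \<lfloor>x + s\<rfloor>)"
    by (simp add: algebra_simps)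
  then show "twisted c \<nu> n s A x (y + 1) = twisted c \<nu> n s A x y"
    by (simp only: twisted_def ee_add ee_of_int mult_1_right)
next
  fix x y :: real
  have "\<lfloor>x + 1 + s\<rfloor> = \<lfloor>x + s\<rfloor> + 1"
    by (metis add.commute add.left_commute floor_add_int of_int_1)
  moreover have "- of_int (c * n) * of_int (\<lfloor>x + s\<rfloor> + 1) * (y - of_int n * \<nu>)
     = - of_int c * of_int n * (y - of_int n * \<nu>) + - of_int (c * n) * of_int \<lfloor>x + s\<rfloor> * (y - of_int n * \<nu>)"
    by (simp add: algebra_simps)
  ultimately show "twisted c \<nu> n s A (x + 1) y = ee (- of_int c * of_int n * (y - of_int n * \<nu>)) * twisted c \<nu> n s A x y"
    by (simp only: twisted_def assms(1) ee_add mult_ac)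
qed

lemma cnj_twisted_mult_twisted: "cnj (twisted c \<nu> n s A x y) * twisted c \<nu> n s A x y = of_real ((A x)\<^sup>2)"
proof -
  have "cnj (twisted c \<nu> n s A x y) * twisted c \<nu> n s A x y
      = of_real (A x * A x) * (cnj (ee (- of_int (c * n) * of_int \<lfloor>x + s\<rfloor> * (y - of_int n * \<nu>)))
          * ee (- of_int (c * n) * of_int \<lfloor>x + s\<rfloor> * (y - of_int n * \<nu>)))"
    by (simp add: twisted_def mult_ac)
  then show ?thesis by (simp add: cnj_ee_mult_ee power2_eq_square)
qed

lemma twisted_amp_pair:
  fixes c n :: int and \<nu> :: real
  defines "f1 \<equiv> twisted c \<nu> n 0 amp_cos" and "f2 \<equiv> twisted c \<nu> n (1 / 2) amp_sin"
  shows "smooth2 f1" "smooth2 f2"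
    and "delta_fun n f1 \<in> spectral_subspace c \<nu> n" "delta_fun n f2 \<in> spectral_subspace c \<nu> n"
    and "cnj (f1 x y) * f1 x y + cnj (f2 x y) * f2 x y = 1"
proof -
  show smooth: "smooth2 f1" "smooth2 f2"
    unfolding f1_def f2_def using amp_cos_eventually_0
    by (auto intro!: smooth2_twisted smooth_real_amp_cos smooth_real_amp_sin amp_sin_eventually_0)
  show "delta_fun n f1 \<in> spectral_subspace c \<nu> n" "delta_fun n f2 \<in> spectral_subspace c \<nu> n"
    using smooth[THEN smooth2_imp_continuous] unfolding spectral_subspace_def f1_def f2_def
    by (blast intro: spectral_fun_twisted amp_cos_periodic amp_sin_periodic)+
  show "cnj (f1 x y) * f1 x y + cnj (f2 x y) * f2 x y = 1"
    using amp_cos_sq_add_amp_sin_sq[of x]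
    unfolding f1_def f2_def cnj_twisted_mult_twisted by (metis of_real_add of_real_1)
qed

section \<open>Products of elements of a single spectral subspace\<close>

lemma qhm_mult_delta_fun:
  "qhm_mult \<mu> \<nu> (delta_fun n f) G x y p
     = f x y * G (x - 2 * of_int n * \<mu>) (y - 2 * of_int n * \<nu>) (p - n)"
proof -
  have "qhm_supp (delta_fun n f) \<subseteq> {n}"
    unfolding qhm_supp_def delta_fun_def by auto
  moreover have "delta_fun n f x y n = 0" if "n \<notin> qhm_supp (delta_fun n f)"
    using that unfolding qhm_supp_def by auto
  ultimately have "qhm_mult \<mu> \<nu> (delta_fun n f) G x y p
      = (\<Sum>q\<in>{n}. delta_fun n f x y q * G (x - 2 * of_int q * \<mu>) (y - 2 * of_int q * \<nu>) (p - q))"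
    unfolding qhm_mult_def by (intro sum.mono_neutral_left) auto
  then show ?thesis by (simp add: delta_fun_def)
qed

lemma qhm_star_delta_fun:
  "qhm_star \<mu> \<nu> (delta_fun n f)
     = delta_fun (- n) (\<lambda>x y. cnj (f (x + 2 * of_int n * \<mu>) (y + 2 * of_int n * \<nu>)))"
  unfolding qhm_star_def delta_fun_def by (intro ext) auto

lemma qhm_mult_star_delta_fun_left:
  "qhm_mult \<mu> \<nu> (qhm_star \<mu> \<nu> (delta_fun n f)) (delta_fun n f) x y p
     = (if p = 0 then cnj (f (x + 2 * of_int n * \<mu>) (y + 2 * of_int n * \<nu>))
                      * f (x + 2 * of_int n * \<mu>) (y + 2 * of_int n * \<nu>) else 0)"
  unfolding qhm_star_delta_fun qhm_mult_delta_fun by (simp add: delta_fun_def)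

lemma qhm_mult_star_delta_fun_right:
  "qhm_mult \<mu> \<nu> (delta_fun n f) (qhm_star \<mu> \<nu> (delta_fun n f)) x y p
     = (if p = 0 then cnj (f x y) * f x y else 0)"
  unfolding qhm_star_delta_fun qhm_mult_delta_fun by (simp add: delta_fun_def mult.commute)

lemma delta_fun_isometries:
  assumes "\<And>x y. cnj (f1 x y) * f1 x y + cnj (f2 x y) * f2 x y = 1"
  shows "(\<lambda>x y p. qhm_mult \<mu> \<nu> (qhm_star \<mu> \<nu> (delta_fun n f1)) (delta_fun n f1) x y p
              + qhm_mult \<mu> \<nu> (qhm_star \<mu> \<nu> (delta_fun n f2)) (delta_fun n f2) x y p) = qhm_one"
    and "(\<lambda>x y p. qhm_mult \<mu> \<nu> (delta_fun n f1) (qhm_star \<mu> \<nu> (delta_fun n f1)) x y p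
              + qhm_mult \<mu> \<nu> (delta_fun n f2) (qhm_star \<mu> \<nu> (delta_fun n f2)) x y p) = qhm_one"
  by (intro ext; simp add: qhm_mult_star_delta_fun_left qhm_mult_star_delta_fun_right qhm_one_def assms)+

theorem mainTheorem10:
  fixes c :: int and \<mu> \<nu> :: real
  assumes "c > 0"
  shows "\<forall>n::int. \<exists>f1 f2. smooth2 f1 \<and> smooth2 f2 \<and>
           delta_fun n f1 \<in> spectral_subspace c \<nu> n \<and>
           delta_fun n f2 \<in> spectral_subspace c \<nu> n \<and>
           (let \<xi>1 = delta_fun n f1; \<xi>2 = delta_fun n f2 in
             (\<lambda>x y p. qhm_mult \<mu> \<nu> (qhm_star \<mu> \<nu> \<xi>1) \<xi>1 x y p
                    + qhm_mult \<mu> \<nu> (qhm_star \<mu> \<nu> \<xi>2) \<xi>2 x y p) = qhm_one \<and>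
             (\<lambda>x y p. qhm_mult \<mu> \<nu> \<xi>1 (qhm_star \<mu> \<nu> \<xi>1) x y p
                    + qhm_mult \<mu> \<nu> \<xi>2 (qhm_star \<mu> \<nu> \<xi>2) x y p) = qhm_one)"
  unfolding Let_def
  by (intro allI exI conjI) (fact twisted_amp_pair delta_fun_isometries[OF twisted_amp_pair(5)])+

end
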